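(* Let $A,B\in\mathbb{C}^{n\times n}$ and let $C=A+B$. Then \[\mathcal{I}(C)\geq \mathcal{I}(A)-\operatorname{rank}(B)\cdot|\Lambda(A)|.\]
   Context: For $M\in\mathbb{C}^{n\times n}$, $\Lambda(M)$ denotes the set of distinct eigenvalues of $M$ and $|\cdot|$ the cardinality of a set. For $\lambda\in\Lambda(M)$, $m_g(M,\lambda)$ denotes the geometric multiplicity of $\lambda$ (dimension of the eigenspace). The derogatory index of $M$ is $\mathcal{I}(M):=\sum_{\lambda\in\Lambda(M)}\big(m_g(M,\lambda)-1\big)$. *)

theory Defs
  imports "HOL-Analysis.Analysis"
begin

definition eigenvalues :: "complex^'n^'n \<Rightarrow> complex set" where
  "eigenvalues M = {c. \<exists>v. v \<noteq> 0 \<and> M *v v = c *s v}"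

definition geom_mult :: "complex^'n^'n \<Rightarrow> complex \<Rightarrow> nat" where
  "geom_mult M c = vec.dim {v. M *v v = c *s v}"

definition derog_index :: "complex^'n^'n \<Rightarrow> nat" where
  "derog_index M = (\<Sum>c\<in>eigenvalues M. geom_mult M c - 1)"

end

theory Submission imports Defs begin

text \<open>
  The eigenspace of \<open>A\<close> for \<open>c\<close> meets the null space of \<open>B\<close> in a subspace of codimension at most
  \<open>rank B\<close>, and that intersection lies in the eigenspace of \<open>A + B\<close> for \<open>c\<close>. Hence
  \<open>m\<^sub>g(A + B, c) \<ge> m\<^sub>g(A, c) - rank B\<close> for every \<open>c\<close>; summing over \<open>c \<in> \<Lambda>(A)\<close> gives the claim, since the
  terms of \<open>\<I>(A + B)\<close> are nonnegative and \<open>m\<^sub>g(A, c) \<ge> 1\<close> on \<open>\<Lambda>(A)\<close>.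
\<close>

context finite_dimensional_vector_space
begin

lemma dim_le_dim_Int_kernel_plus_1:
  assumes f: "Vector_Spaces.linear scale (*) f" and S: "subspace S"
  shows "dim S \<le> dim (S \<inter> {x. f x = 0}) + 1"
proof (cases "S \<subseteq> {x. f x = 0}")
  case True
  then show ?thesis by (simp add: Int_absorb2)
next
  case False
  then obtain s0 where s0: "s0 \<in> S" "f s0 \<noteq> 0" by blast
  let ?H = "S \<inter> {x. f x = 0}"
  interpret f: Vector_Spaces.linear scale "(*)" f by (fact f)
  have "S \<subseteq> span (insert s0 ?H)"
  proof
    fix s assume s: "s \<in> S"
    define t where "t = s - scale (f s / f s0) s0"
    have "t \<in> ?H"
      using S s s0 by (simp add: t_def subspace_diff subspace_scale f.diff f.scale)
    then have "t + scale (f s / f s0) s0 \<in> span (insert s0 ?H)"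
      by (intro span_add span_scale) (auto intro: span_base)
    then show "s \<in> span (insert s0 ?H)" by (simp add: t_def)
  qed
  then have "dim S \<le> dim (insert s0 ?H)" by (rule dim_mono)
  also have "\<dots> \<le> dim ?H + 1" by (simp add: dim_insert)
  finally show ?thesis .
qed

lemma dim_le_dim_Int_common_kernel_plus_card:
  assumes "finite F" "\<And>f. f \<in> F \<Longrightarrow> Vector_Spaces.linear scale (*) f" "subspace S"
  shows "dim S \<le> dim (S \<inter> {x. \<forall>f\<in>F. f x = 0}) + card F"
  using assms
proof (induction F rule: finite_induct)
  case empty
  then show ?case by simp
next
  case (insert g F)
  let ?S = "S \<inter> {x. \<forall>f\<in>F. f x = 0}"
  have "subspace {x. f x = 0}" if "f \<in> F" for f
    using insert.prems(1) that module_hom.subspace_kernel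
    by (fastforce simp: Vector_Spaces.linear_iff_module_hom)
  then have "subspace (S \<inter> \<Inter>((\<lambda>f. {x. f x = 0}) ` F))"
    using insert.prems(2) by (simp add: subspace_inter subspace_Inter)
  moreover have "S \<inter> \<Inter>((\<lambda>f. {x. f x = 0}) ` F) = ?S" by blast
  ultimately have "subspace ?S" by simp
  have "dim S \<le> dim ?S + card F" using insert by simp
  also have "\<dots> \<le> dim (?S \<inter> {x. g x = 0}) + 1 + card F"
    using dim_le_dim_Int_kernel_plus_1[OF _ \<open>subspace ?S\<close>, of g] insert.prems by simp
  also have "?S \<inter> {x. g x = 0} = S \<inter> {x. \<forall>f\<in>insert g F. f x = 0}" by blast
  finally show ?case using insert.hyps by simp
qed

end

lemma dim_le_dim_Int_null_space_plus_rank: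
  fixes B :: "'a::field^'n^'m"
  assumes S: "vec.subspace S"
  shows "vec.dim S \<le> vec.dim (S \<inter> {x. B *v x = 0}) + rank B"
proof -
  obtain R where R: "R \<subseteq> rows B" "vec.independent R" "rows B \<subseteq> vec.span R" "card R = rank B"
    using vec.basis_exists[of "rows B"] by (auto simp: row_rank_def_gen)
  have "finite R" using R(2) vec.independent_bound_general by blast
  define pair :: "'a^'n \<Rightarrow> 'a^'n \<Rightarrow> 'a" where "pair r x = (\<Sum>j\<in>UNIV. r $ j * x $ j)" for r x
  \<comment> \<open>the null space of \<open>B\<close> is cut out by the functionals \<open>pair r\<close> for \<open>r\<close> in a basis of the row space\<close>
  let ?F = "pair ` R"
  have linear: "Vector_Spaces.linear (*s) (*) (pair r)" for r
    by (auto simp: pair_def Vector_Spaces.linear_iff_module_hom module_hom_iff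
          vec.module_axioms module_def sum.distrib distrib_left sum_distrib_left ac_simps)
  have kernel: "{x. \<forall>f\<in>?F. f x = 0} \<subseteq> {x. B *v x = 0}"
  proof
    fix x assume x: "x \<in> {x. \<forall>f\<in>?F. f x = 0}"
    have "vec.subspace {r. pair r x = 0}"
      by (auto simp: vec.subspace_def pair_def distrib_right sum.distrib mult.assoc
          simp flip: sum_distrib_left)
    moreover have "R \<subseteq> {r. pair r x = 0}" using x by auto
    ultimately have "rows B \<subseteq> {r. pair r x = 0}"
      using R(3) vec.span_minimal by blast
    then show "x \<in> {x. B *v x = 0}"
      by (auto simp: rows_def row_def pair_def matrix_vector_mult_def vec_eq_iff)
  qed
  have "vec.dim S \<le> vec.dim (S \<inter> {x. \<forall>f\<in>?F. f x = 0}) + card ?F"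
    using \<open>finite R\<close> S linear by (intro vec.dim_le_dim_Int_common_kernel_plus_card) auto
  also have "vec.dim (S \<inter> {x. \<forall>f\<in>?F. f x = 0}) \<le> vec.dim (S \<inter> {x. B *v x = 0})"
    using kernel by (intro vec.dim_subset) blast
  also have "card ?F \<le> rank B"
    using card_image_le[OF \<open>finite R\<close>, of pair] R(4) by simp
  finally show ?thesis by simp
qed

lemma eigenvectors_of_distinct_eigenvalues_independent:
  fixes M :: "'a::field^'n^'n"
  assumes "finite F" "\<And>c. c \<in> F \<Longrightarrow> v c \<noteq> 0 \<and> M *v v c = c *s v c"
    and "(\<Sum>c\<in>F. k c *s v c) = 0" "c \<in> F"
  shows "k c = 0"
  using assms
proof (induction F arbitrary: k c rule: finite_induct)
  case empty
  then show ?case by simp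
next
  case (insert a F)
  have eigen: "M *v v c = c *s v c" if "c \<in> insert a F" for c
    using insert.prems(1) that by blast
  have sum: "k a *s v a + (\<Sum>c\<in>F. k c *s v c) = 0"
    using insert.prems(2) insert.hyps by simp
  \<comment> \<open>applying \<open>M - a\<close> removes the \<open>v a\<close> term and leaves a relation among the \<open>v c\<close>, \<open>c \<in> F\<close>\<close>
  have "M *v (k a *s v a + (\<Sum>c\<in>F. k c *s v c))
      = (a * k a) *s v a + (\<Sum>c\<in>F. (c * k c) *s v c)"
    using eigen by (simp add: vec.add vec.sum vec.scale vector_smult_assoc mult.commute)
  with sum have image: "(a * k a) *s v a + (\<Sum>c\<in>F. (c * k c) *s v c) = 0" by simp
  have "(\<Sum>c\<in>F. (k c * (c - a)) *s v c) = (\<Sum>c\<in>F. (c * k c) *s v c) - a *s (\<Sum>c\<in>F. k c *s v c)"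
    by (simp add: vec.scale_sum_right vector_smult_assoc algebra_simps vector_sadd_rdistrib
        vector_ssub_ldistrib flip: sum_subtractf)
  also have "\<dots> = - ((a * k a) *s v a) + a *s (k a *s v a)"
  proof -
    have "(\<Sum>c\<in>F. k c *s v c) = - (k a *s v a)"
      using sum by (simp add: eq_neg_iff_add_eq_0 add.commute)
    moreover have "(\<Sum>c\<in>F. (c * k c) *s v c) = - ((a * k a) *s v a)"
      using image by (simp add: eq_neg_iff_add_eq_0 add.commute)
    ultimately show ?thesis by (simp add: vector_smult_rneg)
  qed
  also have "\<dots> = 0" by (simp add: vector_smult_assoc)
  finally have "(\<Sum>c\<in>F. (k c * (c - a)) *s v c) = 0" .
  then have "\<forall>c\<in>F. k c * (c - a) = 0"
    using insert.IH[of "\<lambda>c. k c * (c - a)"] insert.prems(1) by blast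
  then have zero_on_F: "\<forall>c\<in>F. k c = 0"
    using insert.hyps(2) by auto
  then have "k a *s v a = 0" using sum by simp
  then have "k a = 0" using insert.prems(1) by (auto simp: vec_eq_iff)
  then show ?case using zero_on_F insert.prems(3) by auto
qed

lemma finite_eigenvalues: "finite (eigenvalues (M :: complex^'n^'n))"
proof (rule ccontr)
  assume "infinite (eigenvalues M)"
  then obtain F where F: "finite F" "card F = Suc CARD('n)" "F \<subseteq> eigenvalues M"
    using infinite_arbitrarily_large by blast
  define v where "v c = (SOME v. v \<noteq> 0 \<and> M *v v = c *s v)" for c
  have v: "v c \<noteq> 0 \<and> M *v v c = c *s v c" if "c \<in> F" for c
  proof -
    have "\<exists>v. v \<noteq> 0 \<and> M *v v = c *s v" using that F(3) by (auto simp: eigenvalues_def)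
    then show ?thesis unfolding v_def by (rule someI_ex)
  qed
  have "inj_on v F"
  proof (rule inj_onI)
    fix c d assume "c \<in> F" "d \<in> F" "v c = v d"
    then have "c *s v c = d *s v c" using v by metis
    then have "(c - d) *s v c = 0" by (simp add: vector_ssub_ldistrib)
    then show "c = d" using v \<open>c \<in> F\<close> by (auto simp: vec_eq_iff)
  qed
  have "vec.independent (v ` F)"
    unfolding vec.independent_explicit
  proof (intro conjI allI impI)
    show "finite (v ` F)" using F(1) by simp
    fix g assume "(\<Sum>w\<in>v ` F. g w *s w) = 0"
    then have "(\<Sum>c\<in>F. g (v c) *s v c) = 0" by (simp add: sum.reindex[OF \<open>inj_on v F\<close>])
    then show "\<forall>w\<in>v ` F. g w = 0"
      using eigenvectors_of_distinct_eigenvalues_independent[OF F(1) v, of "g \<circ> v"] by auto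
  qed
  then have "card (v ` F) \<le> CARD('n)"
    using vec.independent_card_le_dim[of "v ` F" UNIV] vec_dim_card[where 'a=complex and 'n='n] by simp
  then show False using F(2) card_image[OF \<open>inj_on v F\<close>] by simp
qed

lemma geom_mult_eq_0_iff: "geom_mult M c = 0 \<longleftrightarrow> c \<notin> eigenvalues M"
  unfolding geom_mult_def eigenvalues_def vec.dim_eq_0 by auto

lemma geom_mult_le_geom_mult_add_plus_rank: "geom_mult A c \<le> geom_mult (A + B) c + rank B"
proof -
  let ?E = "{v. A *v v = c *s v}"
  have "vec.subspace ?E"
    by (auto simp: vec.subspace_def vec.add vec.scale vector_smult_assoc vector_add_ldistrib mult.commute)
  then have "geom_mult A c \<le> vec.dim (?E \<inter> {x. B *v x = 0}) + rank B"
    unfolding geom_mult_def by (rule dim_le_dim_Int_null_space_plus_rank)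
  also have "vec.dim (?E \<inter> {x. B *v x = 0}) \<le> geom_mult (A + B) c"
    unfolding geom_mult_def by (intro vec.dim_subset) (auto simp: matrix_vector_mult_add_rdistrib)
  finally show ?thesis by simp
qed

theorem corollary4p1:
  fixes A B C :: "complex^'n^'n"
  assumes "C = A + B"
  shows "int (derog_index C) \<ge> int (derog_index A) - int (rank B) * int (card (eigenvalues A))"
proof -
  let ?T = "eigenvalues A" and ?U = "eigenvalues C"
  have "int (derog_index A) - int (rank B) * int (card ?T)
      = (\<Sum>c\<in>?T. int (geom_mult A c - 1) - int (rank B))"
    unfolding derog_index_def by (simp add: sum_subtractf of_nat_sum)
  also have "\<dots> \<le> (\<Sum>c\<in>?T. int (geom_mult C c - 1))"
  proof (rule sum_mono)
    fix c assume "c \<in> ?T"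
    then have "geom_mult A c \<noteq> 0" by (simp add: geom_mult_eq_0_iff)
    moreover have "geom_mult A c \<le> geom_mult C c + rank B"
      using assms geom_mult_le_geom_mult_add_plus_rank by simp
    ultimately show "int (geom_mult A c - 1) - int (rank B) \<le> int (geom_mult C c - 1)" by linarith
  qed
  also have "\<dots> = (\<Sum>c\<in>?T \<inter> ?U. int (geom_mult C c - 1))"
    by (rule sum.mono_neutral_right) (auto simp: finite_eigenvalues geom_mult_eq_0_iff[of C, symmetric])
  also have "\<dots> \<le> int (derog_index C)"
    unfolding derog_index_def of_nat_sum by (rule sum_mono2) (auto simp: finite_eigenvalues)
  finally show ?thesis .
qed

end
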